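(* Let $r\ge1$, let $\mathcal{A}:\mathbb{C}^{m\times n}\to\mathbb{C}^p$ be linear with $\delta_{4r}(\mathcal{A})\le0.04$, let $X_0\in\mathbb{C}^{m\times n}$ with $\mathrm{rank}(X_0)\le r$, let $\nu\in\mathbb{C}^p$ and $b=\mathcal{A}X_0+\nu$. Let $\widehat{X}\in\mathbb{C}^{m\times n}$ with $\mathrm{rank}(\widehat{X})\le r$, and let $\Psi'$ be any maximizer of $\|\mathcal{P}_\Psi\mathcal{A}^*(b-\mathcal{A}\widehat{X})\|_F$ over $\Psi\subset\mathbb{O}$ with $|\Psi|\le2r$. Then $$\|\mathcal{P}_{\Psi'}^\perp(X_0-\widehat{X})\|_F\le0.24\|X_0-\widehat{X}\|_F+2.13\|\nu\|_2.$$
   Context: $\mathbb{C}^p$ has inner product $\langle x,y\rangle=y^Hx$ and norm $\|\cdot\|_2$; $\mathbb{C}^{m\times n}$ has inner product $\langle X,Y\rangle=\mathrm{tr}(Y^HX)$ and Frobenius norm $\|\cdot\|_F$; $\mathcal{A}^*$ is the adjoint of $\mathcal{A}$. $\delta_s(\mathcal{A})$ is the smallest $\delta\ge0$ such that $(1-\delta)\|X\|_F^2\le\|\mathcal{A}X\|_2^2\le(1+\delta)\|X\|_F^2$ for all $X$ with $\mathrm{rank}(X)\le s$. The set of atoms $\mathbb{O}$ is a set of unit-Frobenius-norm rank-one matrices such that every nonzero rank-one matrix is a scalar multiple of exactly one element of $\mathbb{O}$. For $\Psi\subset\mathbb{O}$, $\mathcal{P}_\Psi$ is the orthogonal projection onto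 $\mathrm{span}(\Psi)$ and $\mathcal{P}_\Psi^\perp=I-\mathcal{P}_\Psi$. (In the paper, $\widehat{X}$ is the previous ADMiRA estimate, which has rank at most $r$.) *)

theory Defs
  imports "HOL-Analysis.Analysis"
begin

text \<open>Matrices in C^(m x n) are modelled as complex^'n^'m (row i = X$i); the library
  norm on this type is the Frobenius norm, and on complex^'p it is the 2-norm.
  The library rank (row rank over the field) is the complex rank.\<close>

definition mscale :: "complex \<Rightarrow> complex^'n^'m \<Rightarrow> complex^'n^'m" where
  "mscale c X = (\<chi> i j. c * X$i$j)"

definition frob_inner :: "complex^'n^'m \<Rightarrow> complex^'n^'m \<Rightarrow> complex" where
  "frob_inner X Y = (\<Sum>i\<in>UNIV. \<Sum>j\<in>UNIV. X$i$j * cnj (Y$i$j))"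

definition vinner :: "complex^'p \<Rightarrow> complex^'p \<Rightarrow> complex" where
  "vinner x y = (\<Sum>k\<in>UNIV. x$k * cnj (y$k))"

definition clinear_op :: "(complex^'n^'m \<Rightarrow> complex^'p) \<Rightarrow> bool" where
  "clinear_op A \<longleftrightarrow> (\<forall>X Y. A (X + Y) = A X + A Y) \<and> (\<forall>c X. A (mscale c X) = c *s A X)"

definition rip_const :: "(complex^'n^'m \<Rightarrow> complex^'p) \<Rightarrow> nat \<Rightarrow> real" where
  "rip_const A s = Inf {\<delta>. \<delta> \<ge> 0 \<and> (\<forall>X. rank X \<le> s \<longrightarrow>
       (1 - \<delta>) * (norm X)\<^sup>2 \<le> (norm (A X))\<^sup>2 \<and> (norm (A X))\<^sup>2 \<le> (1 + \<delta>) * (norm X)\<^sup>2)}"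

definition atom_set :: "(complex^'n^'m) set \<Rightarrow> bool" where
  "atom_set Ats \<longleftrightarrow> (\<forall>a\<in>Ats. rank a = 1 \<and> norm a = 1) \<and>
     (\<forall>X. rank X = 1 \<longrightarrow> (\<exists>!a. a \<in> Ats \<and> (\<exists>c. X = mscale c a)))"

definition mspan :: "(complex^'n^'m) set \<Rightarrow> (complex^'n^'m) set" where
  "mspan S = {(\<Sum>a\<in>F. mscale (c a) a) | F c. finite F \<and> F \<subseteq> S}"

definition proj :: "(complex^'n^'m) set \<Rightarrow> complex^'n^'m \<Rightarrow> complex^'n^'m" where
  "proj S X = (THE Y. Y \<in> mspan S \<and> (\<forall>Z\<in>mspan S. frob_inner (X - Y) Z = 0))"

definition proj_perp :: "(complex^'n^'m) set \<Rightarrow> complex^'n^'m \<Rightarrow> complex^'n^'m" where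
  "proj_perp S X = X - proj S X"

end

theory Submission imports Defs begin

text \<open>Write \<open>D = X0 - Xhat\<close> (rank at most \<open>2r\<close>), let \<open>T\<close> be at most \<open>2r\<close> atoms
  whose span contains \<open>D\<close>, and let \<open>w\<close> be the projection of the proxy
  \<open>y = A\<^sup>*(b - A Xhat) = A\<^sup>*(A D + \<nu>)\<close> onto the span of \<open>\<Psi>' \<union> T\<close>, a space of matrices of rank
  at most \<open>4r\<close>. On that space the RIP makes \<open>A\<^sup>*A\<close> close to the identity, so
  \<open>\<parallel>w - D\<parallel> \<le> \<epsilon> = \<delta>\<parallel>D\<parallel> + \<surd>(1+\<delta>)\<parallel>\<nu>\<parallel>\<close>. Since \<open>\<Psi>'\<close> captures at least as much of \<open>y\<close>, hence of
  \<open>w\<close>, as \<open>T\<close> does, Pythagoras gives \<open>\<parallel>w - P\<^sub>\<Psi>\<^sub>' w\<parallel> \<le> \<parallel>w - P\<^sub>T w\<parallel> \<le> \<parallel>w - D\<parallel>\<close>, and therefore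
  \<open>\<parallel>P\<^sup>\<bottom>\<^sub>\<Psi>\<^sub>' D\<parallel> \<le> \<parallel>D - P\<^sub>\<Psi>\<^sub>' w\<parallel> \<le> 2\<epsilon>\<close>. Already \<open>\<delta> = 0.1 > 0.04\<close> gives the stated constants.\<close>

lemma row_eq: "row i A = A $ i"
  by (simp add: row_def vec_eq_iff)

lemma rows_eq: "rows A = range (\<lambda>i. A $ i)"
  by (auto simp: rows_def row_eq)

lemma rank_le_add_of_rows_subset_span:
  fixes Z X Y :: "'a::field^'n^'m"
  assumes "rows Z \<subseteq> vec.span (rows X \<union> rows Y)"
  shows "rank Z \<le> rank X + rank Y"
proof -
  obtain B1 where B1: "B1 \<subseteq> rows X" "vec.independent B1" "rows X \<subseteq> vec.span B1"
      "card B1 = vec.dim (rows X)"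
    using vec.basis_exists by blast
  obtain B2 where B2: "B2 \<subseteq> rows Y" "vec.independent B2" "rows Y \<subseteq> vec.span B2"
      "card B2 = vec.dim (rows Y)"
    using vec.basis_exists by blast
  have "rows X \<union> rows Y \<subseteq> vec.span (B1 \<union> B2)"
    using B1(3) B2(3) vec.span_mono[of B1 "B1 \<union> B2"] vec.span_mono[of B2 "B1 \<union> B2"] by blast
  then have "rows Z \<subseteq> vec.span (B1 \<union> B2)"
    using assms vec.span_minimal vec.subspace_span by blast
  then have "vec.dim (rows Z) \<le> card (B1 \<union> B2)"
    using B1(2) B2(2) vec.finiteI_independent by (intro vec.dim_le_card) auto
  also have "\<dots> \<le> card B1 + card B2"
    by (rule card_Un_le)
  finally show ?thesis
    using B1 B2 by (simp add: row_rank_def_gen)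
qed

lemma row_in_span_rows_Un:
  "X $ i \<in> vec.span (rows X \<union> rows Y)" "Y $ i \<in> vec.span (rows X \<union> rows Y)"
  by (auto intro!: vec.span_base simp: rows_eq)

lemma rank_add_le: "rank (X + Y) \<le> rank X + rank (Y::'a::field^'n^'m)"
  by (rule rank_le_add_of_rows_subset_span)
    (auto simp: rows_eq[of "X + Y"] intro!: vec.span_add row_in_span_rows_Un)

lemma rank_diff_le: "rank (X - Y) \<le> rank X + rank (Y::'a::field^'n^'m)"
  by (rule rank_le_add_of_rows_subset_span)
    (auto simp: rows_eq[of "X - Y"] intro!: vec.span_diff row_in_span_rows_Un)

lemma rank_eq_0_iff: "rank (X::'a::field^'n^'m) = 0 \<longleftrightarrow> X = 0"
proof
  assume "rank X = 0"
  then have "range (($) X) \<subseteq> {0}"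
    by (simp add: row_rank_def_gen rows_eq)
  then show "X = 0"
    by (auto simp: vec_eq_iff image_subset_iff)
qed (auto simp: row_rank_def_gen rows_eq)

lemma rank_sum_le_card:
  assumes "\<And>a. a \<in> F \<Longrightarrow> rank (f a) \<le> (1::nat)"
  shows "rank (sum f F :: 'a::field^'n^'m) \<le> card F"
  using assms
proof (induction F rule: infinite_finite_induct)
  case (insert x F)
  have "rank (sum f (insert x F)) \<le> rank (f x) + rank (sum f F)"
    using insert.hyps rank_add_le by simp
  also have "\<dots> \<le> 1 + card F"
    using insert by (intro add_mono) auto
  finally show ?case
    using insert.hyps by simp
qed (auto simp: rank_eq_0_iff)

lemma rank_mscale_le: "rank (mscale c X) \<le> rank X"
proof -
  have "rows (mscale c X) \<subseteq> vec.span (rows X)"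
  proof
    fix v assume "v \<in> rows (mscale c X)"
    then obtain i where "v = mscale c X $ i"
      by (auto simp: rows_eq)
    then have "v = c *s X $ i"
      by (simp add: mscale_def vec_eq_iff)
    moreover have "X $ i \<in> vec.span (rows X)"
      by (auto intro!: vec.span_base simp: rows_eq)
    ultimately show "v \<in> vec.span (rows X)"
      using vec.span_scale by blast
  qed
  then have "vec.dim (rows (mscale c X)) \<le> vec.dim (vec.span (rows X))"
    by (rule vec.dim_subset)
  then show ?thesis
    by (simp add: row_rank_def_gen)
qed

lemma mscale_add: "mscale c (X + Y) = mscale c X + mscale c Y"
  by (simp add: mscale_def vec_eq_iff algebra_simps)

lemma mscale_add_left: "mscale (c + d) X = mscale c X + mscale d X"
  by (simp add: mscale_def vec_eq_iff algebra_simps)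

lemma mscale_mscale: "mscale c (mscale d X) = mscale (c * d) X"
  by (simp add: mscale_def vec_eq_iff algebra_simps)

lemma mscale_zero [simp]: "mscale c 0 = 0" "mscale 0 X = 0"
  by (simp_all add: mscale_def vec_eq_iff)

lemma mscale_one [simp]: "mscale 1 X = X"
  by (simp add: mscale_def vec_eq_iff)

lemma mscale_sum: "mscale c (sum f F) = (\<Sum>a\<in>F. mscale c (f a))"
  by (induction F rule: infinite_finite_induct) (auto simp: mscale_add)

lemma scaleR_eq_mscale: "r *\<^sub>R X = mscale (complex_of_real r) X"
  unfolding mscale_def vec_eq_iff
  by (simp add: vector_scaleR_component scaleR_conv_of_real[where 'a=complex])

lemma linear_if_clinear_op:
  assumes "clinear_op (A :: complex^'n^'m \<Rightarrow> complex^'p)"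
  shows "linear A"
proof (rule linearI)
  show "A (x + y) = A x + A y" for x y
    using assms by (simp add: clinear_op_def)
  show "A (r *\<^sub>R x) = r *\<^sub>R A x" for r x
  proof -
    have "A (r *\<^sub>R x) = complex_of_real r *s A x"
      using assms by (simp add: clinear_op_def scaleR_eq_mscale)
    then show ?thesis
      unfolding vec_eq_iff by (simp add: vector_scaleR_component scaleR_conv_of_real[where 'a=complex])
  qed
qed

lemma mspanI: "finite F \<Longrightarrow> F \<subseteq> S \<Longrightarrow> X = (\<Sum>a\<in>F. mscale (c a) a) \<Longrightarrow> X \<in> mspan S"
  unfolding mspan_def by blast

lemma mspan_zero: "0 \<in> mspan S"
  by (rule mspanI[of "{}"]) auto

lemma mspan_base: "a \<in> S \<Longrightarrow> a \<in> mspan S"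
  by (rule mspanI[of "{a}" _ _ "\<lambda>_. 1"]) auto

lemma mspan_mono: "S \<subseteq> T \<Longrightarrow> mspan S \<subseteq> mspan T"
  unfolding mspan_def by blast

lemma mspan_mscale: "X \<in> mspan S \<Longrightarrow> mscale k X \<in> mspan S"
proof -
  assume "X \<in> mspan S"
  then obtain F c where F: "finite F" "F \<subseteq> S" "X = (\<Sum>a\<in>F. mscale (c a) a)"
    unfolding mspan_def by blast
  then have "mscale k X = (\<Sum>a\<in>F. mscale (k * c a) a)"
    by (simp add: mscale_sum mscale_mscale)
  then show ?thesis
    using F by (intro mspanI) auto
qed

lemma mspan_add: "X \<in> mspan S \<Longrightarrow> Y \<in> mspan S \<Longrightarrow> X + Y \<in> mspan S"
proof -
  assume "X \<in> mspan S" "Y \<in> mspan S"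
  then obtain F c G d where F: "finite F" "F \<subseteq> S" "X = (\<Sum>a\<in>F. mscale (c a) a)"
    and G: "finite G" "G \<subseteq> S" "Y = (\<Sum>a\<in>G. mscale (d a) a)"
    unfolding mspan_def by blast
  have "X = (\<Sum>a\<in>F \<union> G. mscale (if a \<in> F then c a else 0) a)"
    unfolding F(3) by (rule sum.mono_neutral_cong_left) (use F G in auto)
  moreover have "Y = (\<Sum>a\<in>F \<union> G. mscale (if a \<in> G then d a else 0) a)"
    unfolding G(3) by (rule sum.mono_neutral_cong_left) (use F G in auto)
  ultimately have "X + Y = (\<Sum>a\<in>F \<union> G.
      mscale ((if a \<in> F then c a else 0) + (if a \<in> G then d a else 0)) a)"
    by (simp add: mscale_add_left sum.distrib)
  then show ?thesis
    using F G by (intro mspanI) auto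
qed

lemma mspan_sum: "(\<And>a. a \<in> F \<Longrightarrow> f a \<in> mspan S) \<Longrightarrow> sum f F \<in> mspan S"
  by (induction F rule: infinite_finite_induct) (auto simp: mspan_zero mspan_add)

lemma subspace_mspan: "subspace (mspan S)"
  unfolding subspace_def by (auto simp: mspan_zero mspan_add scaleR_eq_mscale mspan_mscale)

lemma mspan_diff: "X \<in> mspan S \<Longrightarrow> Y \<in> mspan S \<Longrightarrow> X - Y \<in> mspan S"
  using subspace_mspan subspace_diff by blast

lemma rank_le_card_if_mspan:
  assumes "\<forall>a\<in>S. rank a \<le> 1" "finite S" "X \<in> mspan S"
  shows "rank X \<le> card S"
proof -
  obtain F c where F: "finite F" "F \<subseteq> S" "X = (\<Sum>a\<in>F. mscale (c a) a)"
    using assms(3) unfolding mspan_def by blast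
  have "rank X \<le> card F"
    unfolding F(3) by (rule rank_sum_le_card) (use F assms(1) rank_mscale_le order_trans in blast)
  also have "\<dots> \<le> card S"
    using F assms(2) by (intro card_mono) auto
  finally show ?thesis .
qed

lemma inner_eq_Re_frob_inner: "inner X Y = Re (frob_inner X Y)"
  by (simp add: frob_inner_def inner_vec_def inner_complex_def Re_sum)

lemma inner_eq_Re_vinner: "inner x y = Re (vinner x y)"
  by (simp add: vinner_def inner_vec_def inner_complex_def)

lemma frob_inner_mscale: "frob_inner X (mscale c Z) = cnj c * frob_inner X Z"
  by (simp add: frob_inner_def mscale_def sum_distrib_left algebra_simps)

lemma frob_inner_eq_0_if_orthogonal_mspan:
  assumes "\<forall>Z\<in>mspan S. inner X Z = 0" "Z \<in> mspan S"
  shows "frob_inner X Z = 0"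
proof -
  have "Re (frob_inner X Z) = 0"
    using assms by (simp add: inner_eq_Re_frob_inner)
  moreover have "mscale \<i> Z \<in> mspan S"
    using assms(2) by (rule mspan_mscale)
  then have "Re (frob_inner X (mscale \<i> Z)) = 0"
    using assms(1) by (simp add: inner_eq_Re_frob_inner)
  then have "Im (frob_inner X Z) = 0"
    by (simp add: frob_inner_mscale)
  ultimately show ?thesis
    by (simp add: complex_eq_iff)
qed

text \<open>Since \<open>mspan S\<close> is closed under complex scaling, orthogonality for the Frobenius inner
  product is the same as for its real part, the library inner product on \<open>complex^'n^'m\<close>;
  so \<open>proj\<close> is the usual real orthogonal projection.\<close>

lemma proj_unique:
  assumes "Y \<in> mspan S" "\<forall>Z\<in>mspan S. inner (X - Y) Z = 0"
  shows "proj S X = Y"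
  unfolding proj_def
proof (rule the_equality)
  show "Y \<in> mspan S \<and> (\<forall>Z\<in>mspan S. frob_inner (X - Y) Z = 0)"
    using assms frob_inner_eq_0_if_orthogonal_mspan by blast
next
  fix Y' assume Y': "Y' \<in> mspan S \<and> (\<forall>Z\<in>mspan S. frob_inner (X - Y') Z = 0)"
  have "Y - Y' \<in> mspan S"
    using Y' assms mspan_diff by blast
  then have "inner (X - Y') (Y - Y') = 0" "inner (X - Y) (Y - Y') = 0"
    using Y' assms by (simp_all add: inner_eq_Re_frob_inner)
  then have "inner (Y - Y') (Y - Y') = 0"
    by (simp add: inner_diff_left)
  then show "Y' = Y"
    by simp
qed

lemma ex_proj_mspan: "\<exists>Y\<in>mspan S. \<forall>Z\<in>mspan S. inner (X - Y) Z = 0"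
proof -
  obtain y z where "y \<in> span (mspan S)" "\<And>w. w \<in> span (mspan S) \<Longrightarrow> orthogonal z w" "X = y + z"
    using orthogonal_subspace_decomp_exists by blast
  moreover have "span (mspan S) = mspan S"
    by (simp add: subspace_mspan)
  ultimately show ?thesis
    by (intro bexI[of _ y]) (auto simp: orthogonal_def)
qed

lemma proj_in_mspan: "proj S X \<in> mspan S"
  and proj_orthogonal: "Z \<in> mspan S \<Longrightarrow> inner (X - proj S X) Z = 0"
  using ex_proj_mspan[of S X] proj_unique by metis+

lemma norm_proj_pythagoras: "(norm X)\<^sup>2 = (norm (proj S X))\<^sup>2 + (norm (X - proj S X))\<^sup>2"
proof -
  have "orthogonal (proj S X) (X - proj S X)"
    using proj_orthogonal[OF proj_in_mspan] by (simp add: orthogonal_def inner_commute)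
  from norm_add_Pythagorean[OF this] show ?thesis
    by simp
qed

lemma norm_proj_residual_le:
  assumes "Z \<in> mspan S"
  shows "norm (X - proj S X) \<le> norm (X - Z)"
proof -
  have "orthogonal (X - proj S X) (proj S X - Z)"
    using proj_orthogonal[OF mspan_diff[OF proj_in_mspan assms]] by (simp add: orthogonal_def)
  from norm_add_Pythagorean[OF this]
  have "(norm (X - proj S X))\<^sup>2 \<le> (norm (X - Z))\<^sup>2"
    by simp
  then show ?thesis
    using power2_le_imp_le by fastforce
qed

lemma proj_proj_if_mspan_subset:
  assumes "mspan S \<subseteq> mspan G"
  shows "proj S (proj G y) = proj S y"
proof (rule proj_unique)
  show "proj S y \<in> mspan S"
    by (rule proj_in_mspan)
  show "\<forall>Z\<in>mspan S. inner (proj G y - proj S y) Z = 0"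
  proof
    fix Z assume Z: "Z \<in> mspan S"
    have "inner (proj G y - proj S y) Z = inner (y - proj S y) Z - inner (y - proj G y) Z"
      by (simp add: inner_diff_left)
    then show "inner (proj G y - proj S y) Z = 0"
      using Z assms by (auto simp: proj_orthogonal)
  qed
qed

lemma norm_proj_sub_le_if_residual_bounded:
  assumes D: "D \<in> mspan G" and \<epsilon>: "\<epsilon> \<ge> 0"
    and res: "\<forall>Z\<in>mspan G. inner (y - D) Z \<le> \<epsilon> * norm Z"
  shows "norm (proj G y - D) \<le> \<epsilon>"
proof -
  define e where "e = proj G y - D"
  have e: "e \<in> mspan G"
    unfolding e_def using proj_in_mspan D by (rule mspan_diff)
  have "(norm e)\<^sup>2 = inner (y - D) e - inner (y - proj G y) e"
    by (simp add: power2_norm_eq_inner inner_diff_left e_def)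
  then have "norm e * norm e = inner (y - D) e - inner (y - proj G y) e"
    by (simp add: power2_eq_square)
  also have "\<dots> \<le> \<epsilon> * norm e"
    using res e proj_orthogonal[OF e] by simp
  finally show ?thesis
    using \<epsilon> by (cases "e = 0") (auto simp: e_def mult_le_cancel_right)
qed

lemma norm_proj_perp_le_if_maximal:
  assumes D: "D \<in> mspan T" and TG: "mspan T \<subseteq> mspan G" and SG: "mspan S \<subseteq> mspan G"
    and \<epsilon>: "\<epsilon> \<ge> 0" and res: "\<forall>Z\<in>mspan G. inner (y - D) Z \<le> \<epsilon> * norm Z"
    and max: "norm (proj T y) \<le> norm (proj S y)"
  shows "norm (proj_perp S D) \<le> 2 * \<epsilon>"
proof -
  define w where "w = proj G y"
  have wD: "norm (w - D) \<le> \<epsilon>"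
    unfolding w_def using D TG \<epsilon> res by (intro norm_proj_sub_le_if_residual_bounded) auto
  have pS: "proj S w = proj S y" and pT: "proj T w = proj T y"
    unfolding w_def using SG TG by (simp_all add: proj_proj_if_mspan_subset)
  have "(norm (proj T w))\<^sup>2 + (norm (w - proj T w))\<^sup>2 = (norm (proj S w))\<^sup>2 + (norm (w - proj S w))\<^sup>2"
    by (simp flip: norm_proj_pythagoras)
  moreover have "(norm (proj T w))\<^sup>2 \<le> (norm (proj S w))\<^sup>2"
    using max by (simp add: pS pT power_mono)
  ultimately have "(norm (w - proj S w))\<^sup>2 \<le> (norm (w - proj T w))\<^sup>2"
    by linarith
  then have "norm (w - proj S w) \<le> norm (w - proj T w)"
    by (rule power2_le_imp_le) simp
  also have "\<dots> \<le> norm (w - D)"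
    using D by (rule norm_proj_residual_le)
  finally have wS: "norm (w - proj S w) \<le> \<epsilon>"
    using wD by linarith
  have "norm (proj_perp S D) \<le> norm (D - proj S w)"
    unfolding proj_perp_def by (rule norm_proj_residual_le[OF proj_in_mspan])
  also have "\<dots> \<le> 2 * \<epsilon>"
    using norm_diff_triangle_le[of D w \<epsilon> "proj S w" \<epsilon>] wD wS by (simp add: norm_minus_commute)
  finally show ?thesis .
qed

lemma rank_le_card_if_mspan_atoms:
  assumes "atom_set Ats" "S \<subseteq> Ats" "finite S" "X \<in> mspan S"
  shows "rank X \<le> card S"
  using assms by (intro rank_le_card_if_mspan) (auto simp: atom_set_def)

lemma rank_one_decomposition:
  fixes D :: "'a::field^'n^'m"
  obtains F and M :: "'a^'n \<Rightarrow> 'a^'n^'m"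
  where "finite F" "card F \<le> rank D" "\<And>v. rank (M v) \<le> 1" "D = sum M F"
proof -
  obtain B where B: "B \<subseteq> rows D" "vec.independent B" "rows D \<subseteq> vec.span B"
      "card B = vec.dim (rows D)"
    using vec.basis_exists by blast
  have fin: "finite B"
    using B(2) vec.finiteI_independent by auto
  have "\<exists>u. D $ i = (\<Sum>v\<in>B. u v *s v)" for i
    using B(3) unfolding vec.span_finite[OF fin] by (auto simp: rows_eq)
  then obtain c where c: "\<And>i. D $ i = (\<Sum>v\<in>B. c i v *s v)"
    by metis
  define M where "M v = (\<chi> i j. c i v * v $ j)" for v
  have rank_M: "rank (M v) \<le> 1" for v
  proof -
    have "rows (M v) \<subseteq> vec.span {v}"
    proof
      fix w assume "w \<in> rows (M v)"
      then obtain i where "w = M v $ i"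
        by (auto simp: rows_eq)
      then have "w = c i v *s v"
        by (simp add: M_def vec_eq_iff)
      then show "w \<in> vec.span {v}"
        by (simp add: vec.span_base vec.span_scale)
    qed
    then have "vec.dim (rows (M v)) \<le> card {v}"
      by (intro vec.dim_le_card) auto
    then show ?thesis
      by (simp add: row_rank_def_gen)
  qed
  have "D = sum M B"
    by (simp add: vec_eq_iff M_def sum_component c)
  from that[OF fin _ rank_M this] show ?thesis
    using B(4) by (simp add: row_rank_def_gen)
qed

lemma ex_atoms_mspan:
  fixes D :: "complex^'n^'m"
  assumes atoms: "atom_set Ats"
  shows "\<exists>T. T \<subseteq> Ats \<and> finite T \<and> card T \<le> rank D \<and> D \<in> mspan T"
proof -
  obtain F and M :: "complex^'n \<Rightarrow> complex^'n^'m" where F: "finite F" "card F \<le> rank D" and M: "\<And>v. rank (M v) \<le> 1"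
    and D: "D = sum M F"
    using rank_one_decomposition[of D] by metis
  have "\<exists>a. a \<in> Ats \<and> (\<exists>k. M v = mscale k a)" if "M v \<noteq> 0" for v
    using atoms M[of v] that rank_eq_0_iff[of "M v"] unfolding atom_set_def
    by (metis le_neq_implies_less less_one)
  then obtain g where g: "\<And>v. M v \<noteq> 0 \<Longrightarrow> g v \<in> Ats \<and> (\<exists>k. M v = mscale k (g v))"
    by metis
  define T where "T = g ` {v\<in>F. M v \<noteq> 0}"
  have "card T \<le> card F"
    unfolding T_def using F(1) by (intro card_image_le[THEN order_trans] card_mono) auto
  moreover have "M v \<in> mspan T" if "v \<in> F" for v
  proof (cases "M v = 0")
    case False
    then obtain k where "M v = mscale k (g v)"
      using g by blast
    moreover have "g v \<in> T"
      using that False by (auto simp: T_def)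
    ultimately show ?thesis
      by (simp add: mspan_mscale mspan_base)
  qed (simp add: mspan_zero)
  ultimately show ?thesis
    using F g by (intro exI[of _ T]) (auto simp: T_def D intro!: mspan_sum)
qed

definition restricted_isometry :: "(complex^'n^'m \<Rightarrow> complex^'p) \<Rightarrow> nat \<Rightarrow> real \<Rightarrow> bool" where
  "restricted_isometry A s d \<longleftrightarrow> (\<forall>X. rank X \<le> s \<longrightarrow>
     (1 - d) * (norm X)\<^sup>2 \<le> (norm (A X))\<^sup>2 \<and> (norm (A X))\<^sup>2 \<le> (1 + d) * (norm X)\<^sup>2)"

lemma restricted_isometry_mono:
  fixes A :: "complex^'n^'m \<Rightarrow> complex^'p"
  assumes "restricted_isometry A s \<delta>" "\<delta> \<le> d"
  shows "restricted_isometry A s d"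
  unfolding restricted_isometry_def
proof (intro allI impI)
  fix X :: "complex^'n^'m" assume "rank X \<le> s"
  moreover have "(1 - d) * (norm X)\<^sup>2 \<le> (1 - \<delta>) * (norm X)\<^sup>2"
    "(1 + \<delta>) * (norm X)\<^sup>2 \<le> (1 + d) * (norm X)\<^sup>2"
    using assms(2) by (auto intro: mult_right_mono)
  ultimately show "(1 - d) * (norm X)\<^sup>2 \<le> (norm (A X))\<^sup>2 \<and> (norm (A X))\<^sup>2 \<le> (1 + d) * (norm X)\<^sup>2"
    using assms(1) unfolding restricted_isometry_def by fastforce
qed

lemma restricted_isometry_if_rip_const_less:
  fixes A :: "complex^'n^'m \<Rightarrow> complex^'p"
  assumes lin: "linear A" and less: "rip_const A s < d"
  shows "restricted_isometry A s d"
proof -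
  define R where "R = {\<delta>. \<delta> \<ge> 0 \<and> restricted_isometry A s \<delta>}"
  have rip_const: "rip_const A s = Inf R"
    by (simp add: rip_const_def R_def restricted_isometry_def)
  obtain K where K: "\<And>X. norm (A X) \<le> K * norm X"
    using linear_bounded[OF lin] by blast
  have "(norm (A X))\<^sup>2 \<le> (1 + (1 + K\<^sup>2)) * (norm X)\<^sup>2" for X
  proof -
    have "(norm (A X))\<^sup>2 \<le> (K * norm X)\<^sup>2"
      using K[of X] by (intro power_mono) auto
    also have "\<dots> \<le> (1 + (1 + K\<^sup>2)) * (norm X)\<^sup>2"
      unfolding power_mult_distrib by (intro mult_right_mono) auto
    finally show ?thesis .
  qed
  moreover have "(1 - (1 + K\<^sup>2)) * (norm X)\<^sup>2 \<le> (norm (A X))\<^sup>2" for X :: "complex^'n^'m"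
    by (rule order_trans[of _ 0]) (simp_all add: mult_nonpos_nonneg)
  ultimately have "1 + K\<^sup>2 \<in> R"
    unfolding R_def restricted_isometry_def by (auto intro: add_nonneg_nonneg)
  moreover have "bdd_below R"
    unfolding R_def by (rule bdd_belowI[of _ 0]) auto
  ultimately obtain \<delta> where "\<delta> \<in> R" "\<delta> < d"
    using less cInf_less_iff[of R d] unfolding rip_const by blast
  then show ?thesis
    unfolding R_def using restricted_isometry_mono by fastforce
qed

lemma norm_le_sqrt_if_restricted_isometry:
  assumes "restricted_isometry A s d" "rank Z \<le> s"
  shows "norm (A Z) \<le> sqrt (1 + d) * norm Z"
proof -
  have "(norm (A Z))\<^sup>2 \<le> (1 + d) * (norm Z)\<^sup>2"
    using assms unfolding restricted_isometry_def by blast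
  then have "norm (A Z) \<le> sqrt ((1 + d) * (norm Z)\<^sup>2)"
    by (rule real_le_rsqrt)
  then show ?thesis
    by (simp add: real_sqrt_mult)
qed

lemma inner_adjoint_if_vinner_adjoint:
  assumes "\<forall>X y. vinner (A X) y = frob_inner X (Aadj y)"
  shows "inner (Aadj v) Z = inner (A Z) v"
proof -
  have "inner (Aadj v) Z = inner Z (Aadj v)"
    by (rule inner_commute)
  also have "\<dots> = inner (A Z) v"
    using assms by (simp only: inner_eq_Re_frob_inner inner_eq_Re_vinner)
  finally show ?thesis .
qed

text \<open>Polarization: the RIP bounds on \<open>D + Z\<close> and \<open>D - Z\<close> control the cross term.\<close>

lemma restricted_isometry_polarization:
  assumes lin: "linear A" and W: "subspace W" and rk: "\<forall>Z\<in>W. rank Z \<le> s"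
    and rip: "restricted_isometry A s d" and D: "D \<in> W" and Z: "Z \<in> W"
  shows "inner (A D) (A Z) - inner D Z \<le> d * ((norm D)\<^sup>2 + (norm Z)\<^sup>2) / 2"
proof -
  have "D + Z \<in> W" "D - Z \<in> W"
    using D Z W by (auto intro: subspace_add subspace_diff)
  then have "(norm (A D + A Z))\<^sup>2 \<le> (1 + d) * (norm (D + Z))\<^sup>2"
    "(1 - d) * (norm (D - Z))\<^sup>2 \<le> (norm (A D - A Z))\<^sup>2"
    using rip rk linear_add[OF lin] linear_diff[OF lin] unfolding restricted_isometry_def by metis+
  then show ?thesis
    by (simp add: power2_norm_eq_inner inner_add_left inner_add_right inner_diff_left
        inner_diff_right inner_commute algebra_simps)
qed

lemma restricted_isometry_inner:
  assumes lin: "linear A" and W: "subspace W" and rk: "\<forall>Z\<in>W. rank Z \<le> s"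
    and rip: "restricted_isometry A s d" and D: "D \<in> W" and Z: "Z \<in> W"
  shows "inner (A D) (A Z) - inner D Z \<le> d * norm D * norm Z"
proof (cases "D = 0 \<or> Z = 0")
  case True
  then show ?thesis
    using linear_0[OF lin] by auto
next
  case False
  then have pos: "norm D > 0" "norm Z > 0"
    by auto
  text \<open>Rescale \<open>D\<close> and \<open>Z\<close> to equal norms before polarizing.\<close>
  have "norm Z *\<^sub>R D \<in> W" "norm D *\<^sub>R Z \<in> W"
    using D Z W by (auto intro: subspace_scale)
  from restricted_isometry_polarization[OF lin W rk rip this]
  have "norm Z * norm D * (inner (A D) (A Z) - inner D Z)
      \<le> (norm Z * norm D) * (d * norm D * norm Z)"
    by (simp add: linear_scale[OF lin] power2_eq_square algebra_simps)
  then show ?thesis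
    using pos by (simp add: mult_le_cancel_left_pos)
qed

lemma adjoint_residual_le:
  assumes lin: "linear A" and adj: "\<And>v Z. inner (Aadj v) Z = inner (A Z) v"
    and W: "subspace W" and rk: "\<forall>Z\<in>W. rank Z \<le> s"
    and rip: "restricted_isometry A s d" and D: "D \<in> W" and Z: "Z \<in> W"
  shows "inner (Aadj (A D + \<nu>) - D) Z \<le> (d * norm D + sqrt (1 + d) * norm \<nu>) * norm Z"
proof -
  have "inner (Aadj (A D + \<nu>) - D) Z = (inner (A D) (A Z) - inner D Z) + inner (A Z) \<nu>"
    unfolding inner_diff_left adj inner_add_right by (simp add: inner_commute)
  also have "\<dots> \<le> d * norm D * norm Z + norm (A Z) * norm \<nu>"
    using restricted_isometry_inner[OF lin W rk rip D Z] norm_cauchy_schwarz by (rule add_mono)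
  also have "\<dots> \<le> d * norm D * norm Z + sqrt (1 + d) * norm Z * norm \<nu>"
    using norm_le_sqrt_if_restricted_isometry[OF rip] rk Z by (simp add: mult_right_mono)
  finally show ?thesis
    by (simp add: algebra_simps)
qed

theorem lemma1:
  fixes A :: "complex^'n^'m \<Rightarrow> complex^'p"
    and Aadj :: "complex^'p \<Rightarrow> complex^'n^'m"
    and Ats :: "(complex^'n^'m) set"
    and X0 Xhat :: "complex^'n^'m"
    and \<nu> b :: "complex^'p"
    and \<Psi>' :: "(complex^'n^'m) set"
    and r :: nat
  assumes r: "r \<ge> 1"
    and lin: "clinear_op A"
    and adj: "\<forall>X y. vinner (A X) y = frob_inner X (Aadj y)"
    and rip: "rip_const A (4 * r) \<le> 0.04"
    and X0: "rank X0 \<le> r"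
    and b: "b = A X0 + \<nu>"
    and Xhat: "rank Xhat \<le> r"
    and atoms: "atom_set Ats"
    and Psi'_sub: "\<Psi>' \<subseteq> Ats" and Psi'_fin: "finite \<Psi>'" and Psi'_card: "card \<Psi>' \<le> 2 * r"
    and Psi'_max: "\<forall>\<Psi>. \<Psi> \<subseteq> Ats \<and> finite \<Psi> \<and> card \<Psi> \<le> 2 * r \<longrightarrow>
        norm (proj \<Psi> (Aadj (b - A Xhat))) \<le> norm (proj \<Psi>' (Aadj (b - A Xhat)))"
  shows "norm (proj_perp \<Psi>' (X0 - Xhat)) \<le> 0.24 * norm (X0 - Xhat) + 2.13 * norm \<nu>"
proof -
  have linA: "linear A"
    using lin by (rule linear_if_clinear_op)
  have rip': "restricted_isometry A (4 * r) (1/10)"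
    using rip by (intro restricted_isometry_if_rip_const_less[OF linA]) simp
  have adj': "inner (Aadj v) Z = inner (A Z) v" for v Z
    using adj by (rule inner_adjoint_if_vinner_adjoint)
  define D where "D = X0 - Xhat"
  have rank_D: "rank D \<le> 2 * r"
    using rank_diff_le[of X0 Xhat] X0 Xhat unfolding D_def by linarith
  obtain T where T: "T \<subseteq> Ats" "finite T" "card T \<le> rank D" "D \<in> mspan T"
    using ex_atoms_mspan[OF atoms] by blast
  define G where "G = \<Psi>' \<union> T"
  have "card G \<le> 4 * r"
    using card_Un_le[of \<Psi>' T] T(3) rank_D Psi'_card unfolding G_def by linarith
  then have rank_G: "\<forall>Z\<in>mspan G. rank Z \<le> 4 * r"
    using rank_le_card_if_mspan_atoms[OF atoms, of G] T Psi'_sub Psi'_fin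
    unfolding G_def by fastforce
  have G: "mspan T \<subseteq> mspan G" "mspan \<Psi>' \<subseteq> mspan G"
    unfolding G_def by (auto intro!: mspan_mono)
  have res: "b - A Xhat = A D + \<nu>"
    unfolding b D_def by (simp add: linear_diff[OF linA])
  define \<epsilon> where "\<epsilon> = 1/10 * norm D + sqrt (1 + 1/10) * norm \<nu>"
  have "norm (proj_perp \<Psi>' D) \<le> 2 * \<epsilon>"
  proof (rule norm_proj_perp_le_if_maximal[OF T(4) G])
    show "\<epsilon> \<ge> 0"
      by (simp add: \<epsilon>_def)
    show "\<forall>Z\<in>mspan G. inner (Aadj (b - A Xhat) - D) Z \<le> \<epsilon> * norm Z"
      unfolding res \<epsilon>_def using adjoint_residual_le[OF linA adj' subspace_mspan rank_G rip'] T(4) G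
      by blast
    show "norm (proj T (Aadj (b - A Xhat))) \<le> norm (proj \<Psi>' (Aadj (b - A Xhat)))"
      using Psi'_max T rank_D by auto
  qed
  also have "2 * \<epsilon> \<le> 0.24 * norm D + 2.13 * norm \<nu>"
  proof -
    have "sqrt (1 + 1/10) \<le> 1.065"
      by (rule real_le_lsqrt) (simp_all add: power2_eq_square)
    from mult_right_mono[OF this norm_ge_zero[of \<nu>]] show ?thesis
      unfolding \<epsilon>_def by simp (use norm_ge_zero[of D] in linarith)
  qed
  finally show ?thesis
    by (simp add: D_def)
qed

end
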